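(* Let $(L,\vee,\wedge,0,1)$ be a complemented modular lattice with $0\neq1$, let $a\in L$ and let $A$ be a non-empty subset of $L$. Then $(a^+,\le)$, $(A^+,\le)$ and $(a^{++},\le)$ are antichains.
   Context: For $a\in L$, $a^+:=\{x\in L\mid a\vee x=1,\ a\wedge x=0\}$ (the set of all complements of $a$). For $A\subseteq L$, $A^+:=\{x\in L\mid a\vee x=1\text{ and }a\wedge x=0\text{ for all }a\in A\}$, and $a^{++}:=(a^+)^+$. *)

theory Defs
  imports Main
begin

definition modular_lattice :: "'a::lattice itself \<Rightarrow> bool" where
  "modular_lattice _ \<longleftrightarrow> (\<forall>x y z::'a. x \<le> z \<longrightarrow> sup x (inf y z) = inf (sup x y) z)"

definition complemented_lattice :: "'a::bounded_lattice itself \<Rightarrow> bool" where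
  "complemented_lattice _ \<longleftrightarrow> (\<forall>x::'a. \<exists>y. sup x y = top \<and> inf x y = bot)"

definition compls :: "'a::bounded_lattice \<Rightarrow> 'a set" where
  "compls a = {x. sup a x = top \<and> inf a x = bot}"

definition compls_set :: "'a::bounded_lattice set \<Rightarrow> 'a set" where
  "compls_set A = {x. \<forall>a\<in>A. sup a x = top \<and> inf a x = bot}"

definition antichain_on :: "'a::order set \<Rightarrow> bool" where
  "antichain_on S \<longleftrightarrow> (\<forall>x\<in>S. \<forall>y\<in>S. x \<le> y \<longrightarrow> x = y)"

end

theory Submission
  imports Defs
begin

text \<open>If x \<le> y are both complements of b, modularity gives
  x = x \<squnion> (b \<sqinter> y) = (x \<squnion> b) \<sqinter> y = y.
  Each of the three sets is contained in the set of complements of a single element: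
  a^+ trivially, A^+ in the complements of any member of A, and a^++ in the
  complements of any complement of a.\<close>

lemma antichain_on_subset:
  assumes "antichain_on T" and "S \<subseteq> T"
  shows "antichain_on S"
  using assms unfolding antichain_on_def by blast

lemma antichain_on_compls:
  fixes b :: "'a::bounded_lattice"
  assumes modular: "modular_lattice TYPE('a)"
  shows "antichain_on (compls b)"
  unfolding antichain_on_def
proof (intro ballI impI)
  fix x y assume x: "x \<in> compls b" and y: "y \<in> compls b" and "x \<le> y"
  then have "sup x (inf b y) = inf (sup x b) y"
    using modular unfolding modular_lattice_def by blast
  then show "x = y"
    using x y by (simp add: compls_def sup_commute)
qed

lemma compls_set_subset_compls:
  assumes "a \<in> A"
  shows "compls_set A \<subseteq> compls a"
  using assms unfolding compls_set_def compls_def by blast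

lemma compls_nonempty:
  fixes a :: "'a::bounded_lattice"
  assumes "complemented_lattice TYPE('a)"
  shows "compls a \<noteq> {}"
  using assms unfolding complemented_lattice_def compls_def by blast

lemma antichain_on_compls_set:
  fixes A :: "'a::bounded_lattice set"
  assumes "modular_lattice TYPE('a)" and "A \<noteq> {}"
  shows "antichain_on (compls_set A)"
proof -
  obtain a where "a \<in> A" using \<open>A \<noteq> {}\<close> by blast
  then show ?thesis
    using antichain_on_subset[OF antichain_on_compls[OF assms(1)]] compls_set_subset_compls
    by blast
qed

theorem corollary1:
  fixes a :: "'a::bounded_lattice" and A :: "'a set"
  assumes "modular_lattice TYPE('a)"
    and "complemented_lattice TYPE('a)"
    and "(bot::'a) \<noteq> top"
    and "A \<noteq> {}"
  shows "antichain_on (compls a) \<and> antichain_on (compls_set A)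
         \<and> antichain_on (compls_set (compls a))"
  using antichain_on_compls[OF assms(1)]
    antichain_on_compls_set[OF assms(1) assms(4)]
    antichain_on_compls_set[OF assms(1) compls_nonempty[OF assms(2)]]
  by blast

end
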